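(* Let $\Sigma\in\mathbb{R}^{p\times p}$ with $\Sigma\succ0$, $\theta_0\in\mathbb{R}^p$ with $s_0=\|\theta_0\|_0$, $\xi>0$, and let $\widehat\theta^\infty=\widehat\theta^\infty(\xi)$ be the unique minimizer of $\theta\mapsto\frac12\langle\theta-\theta_0,\Sigma(\theta-\theta_0)\rangle+\xi\|\theta\|_1$. Then $$\|\widehat\theta^\infty\|_0\le\Big(1+\frac{4\|\Sigma\|_2}{\kappa(s_0,1)}\Big)s_0.$$
   Context: $\kappa(s,c_0)=\min_{J\subseteq[p],|J|\le s}\ \min_{u\in\mathbb{R}^p,\ \|u_{J^c}\|_1\le c_0\|u_J\|_1}\frac{\langle u,\Sigma u\rangle}{\|u\|_2^2}$; $\|\cdot\|_0$ counts nonzero entries; $\|\Sigma\|_2$ is the spectral norm. *)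

theory Defs
  imports "HOL-Analysis.Analysis"
begin

definition l0norm :: "real ^ 'n \<Rightarrow> nat" where
  "l0norm x = card {i. x $ i \<noteq> 0}"

definition l1norm :: "real ^ 'n \<Rightarrow> real" where
  "l1norm x = (\<Sum>i\<in>UNIV. \<bar>x $ i\<bar>)"

definition l1norm_on :: "'n set \<Rightarrow> real ^ 'n \<Rightarrow> real" where
  "l1norm_on J x = (\<Sum>i\<in>J. \<bar>x $ i\<bar>)"

definition kappa :: "real ^ 'n ^ 'n \<Rightarrow> nat \<Rightarrow> real \<Rightarrow> real" where
  "kappa \<Sigma> s c0 = Inf {(u \<bullet> (\<Sigma> *v u)) / (norm u)^2 | J u.
      card (J :: 'n set) \<le> s \<and> u \<noteq> 0 \<and> l1norm_on (- J) u \<le> c0 * l1norm_on J u}"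

definition spec_norm :: "real ^ 'n ^ 'n \<Rightarrow> real" where
  "spec_norm \<Sigma> = onorm (\<lambda>x. \<Sigma> *v x)"

definition pos_def :: "real ^ 'n ^ 'n \<Rightarrow> bool" where
  "pos_def \<Sigma> \<longleftrightarrow> transpose \<Sigma> = \<Sigma> \<and> (\<forall>u. u \<noteq> 0 \<longrightarrow> u \<bullet> (\<Sigma> *v u) > 0)"

definition lasso_obj :: "real ^ 'n ^ 'n \<Rightarrow> real ^ 'n \<Rightarrow> real \<Rightarrow> real ^ 'n \<Rightarrow> real" where
  "lasso_obj \<Sigma> \<theta>0 \<xi> \<theta> = (1/2) * ((\<theta> - \<theta>0) \<bullet> (\<Sigma> *v (\<theta> - \<theta>0))) + \<xi> * l1norm \<theta>"

end

theory Submission imports Defs begin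

text \<open>
  Let \<open>D = \<theta>hat - \<theta>0\<close> and let \<open>S0\<close> be the support of \<open>\<theta>0\<close>. Comparing the objective at
  \<open>\<theta>hat\<close> with its value at \<open>\<theta>0\<close> gives the basic inequality
  \<open>\<langle>D, \<Sigma> D\<rangle> / 2 + \<xi> \<parallel>D\<parallel>\<^sub>1 over -S0 \<le> \<xi> \<parallel>D\<parallel>\<^sub>1 over S0\<close>, so \<open>D\<close> lies in the cone defining
  \<open>\<kappa>(s0, 1)\<close>, and Cauchy-Schwarz on \<open>S0\<close> yields \<open>\<langle>D, \<Sigma> D\<rangle> \<le> 4 \<xi>\<^sup>2 s0 / \<kappa>\<close>.
  Shrinking an active coordinate of \<open>\<theta>hat\<close> lowers the penalty at rate \<open>\<xi>\<close>, so optimality forces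
  \<open>|(\<Sigma> D)\<^sub>i| \<ge> \<xi>\<close> on the whole support of \<open>\<theta>hat\<close>. Hence
  \<open>\<xi>\<^sup>2 \<parallel>\<theta>hat\<parallel>\<^sub>0 \<le> \<parallel>\<Sigma> D\<parallel>\<^sup>2 \<le> \<parallel>\<Sigma>\<parallel>\<^sub>2 \<langle>D, \<Sigma> D\<rangle> \<le> 4 \<parallel>\<Sigma>\<parallel>\<^sub>2 \<xi>\<^sup>2 s0 / \<kappa>\<close>, which is the claimed
  bound even without its summand \<open>s0\<close>.
\<close>

lemma inner_matrix_vector_symmetric:
  fixes S :: "real^'n^'n"
  assumes "transpose S = S"
  shows "x \<bullet> (S *v y) = y \<bullet> (S *v x)"
proof -
  have "x \<bullet> (S *v y) = (x v* S) \<bullet> y" by (simp add: dot_lmul_matrix)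
  also have "x v* S = S *v x" by (metis assms vector_transpose_matrix)
  finally show ?thesis by (simp add: inner_commute)
qed

lemma quadratic_form_add:
  fixes S :: "real^'n^'n"
  assumes "transpose S = S"
  shows "(a + b) \<bullet> (S *v (a + b)) = a \<bullet> (S *v a) + 2 * (b \<bullet> (S *v a)) + b \<bullet> (S *v b)"
  using inner_matrix_vector_symmetric[OF assms, of a b]
  by (simp add: matrix_vector_right_distrib inner_add_left inner_add_right)

lemma quadratic_form_scaleR:
  fixes S :: "real^'n^'n"
  shows "(c *\<^sub>R u) \<bullet> (S *v (c *\<^sub>R u)) = c\<^sup>2 * (u \<bullet> (S *v u))"
  by (simp add: matrix_vector_mult_scaleR power2_eq_square)

lemma pos_def_symmetric: "pos_def S \<Longrightarrow> transpose S = S"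
  by (simp add: pos_def_def)

lemma pos_def_quadratic_form_nonneg:
  "pos_def S \<Longrightarrow> 0 \<le> u \<bullet> (S *v u)"
  unfolding pos_def_def by (cases "u = 0") (auto intro: less_imp_le)

lemma pos_def_Cauchy_Schwarz:
  fixes S :: "real^'n^'n"
  assumes "pos_def S"
  shows "(x \<bullet> (S *v y))\<^sup>2 \<le> (x \<bullet> (S *v x)) * (y \<bullet> (S *v y))"
proof (cases "y = 0")
  case False
  define a b c where "a = x \<bullet> (S *v x)" and "b = y \<bullet> (S *v y)" and "c = x \<bullet> (S *v y)"
  have b_pos: "b > 0" using assms False by (simp add: pos_def_def b_def)
  have sym: "transpose S = S" by (rule pos_def_symmetric[OF assms])
  define t where "t = c / b"
  have "0 \<le> (x + (- t) *\<^sub>R y) \<bullet> (S *v (x + (- t) *\<^sub>R y))"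
    by (rule pos_def_quadratic_form_nonneg[OF assms])
  also have "\<dots> = a - 2 * t * c + t * t * b"
    unfolding quadratic_form_add[OF sym]
    using inner_matrix_vector_symmetric[OF sym, of x y]
    by (simp add: a_def b_def c_def matrix_vector_mult_scaleR del: scaleR_minus_left)
  also have "\<dots> = a - c\<^sup>2 / b" using b_pos by (simp add: t_def field_simps power2_eq_square)
  finally show ?thesis using b_pos by (simp add: a_def b_def c_def field_simps)
qed simp

lemma spec_norm_nonneg: "0 \<le> spec_norm S"
  unfolding spec_norm_def by (rule onorm_pos_le[OF matrix_vector_mul_bounded_linear])

lemma norm_matrix_vector_le_spec_norm:
  fixes S :: "real^'n^'n"
  assumes "pos_def S"
  shows "(norm (S *v x))\<^sup>2 \<le> spec_norm S * (x \<bullet> (S *v x))"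
proof (cases "S *v x = 0")
  case True
  then show ?thesis
    using spec_norm_nonneg pos_def_quadratic_form_nonneg[OF assms] by simp
next
  case False
  define y where "y = S *v x"
  have "x \<bullet> (S *v y) = (norm y)\<^sup>2"
    using inner_matrix_vector_symmetric[OF pos_def_symmetric[OF assms], of x y]
    by (simp add: y_def power2_norm_eq_inner)
  then have "((norm y)\<^sup>2)\<^sup>2 \<le> (x \<bullet> (S *v x)) * (y \<bullet> (S *v y))"
    using pos_def_Cauchy_Schwarz[OF assms, of x y] by simp
  also have "y \<bullet> (S *v y) \<le> norm y * norm (S *v y)" by (rule norm_cauchy_schwarz)
  also have "norm (S *v y) \<le> spec_norm S * norm y"
    unfolding spec_norm_def by (rule onorm[OF matrix_vector_mul_bounded_linear])
  finally have "((norm y)\<^sup>2)\<^sup>2 \<le> (x \<bullet> (S *v x)) * (norm y * (spec_norm S * norm y))"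
    using pos_def_quadratic_form_nonneg[OF assms, of x] by (simp add: mult_left_mono)
  then have "(norm y)\<^sup>2 * (norm y)\<^sup>2 \<le> (spec_norm S * (x \<bullet> (S *v x))) * (norm y)\<^sup>2"
    by (simp add: power2_eq_square algebra_simps)
  moreover have "(norm y)\<^sup>2 > 0" using False by (simp add: y_def)
  ultimately have "(norm y)\<^sup>2 \<le> spec_norm S * (x \<bullet> (S *v x))"
    using mult_le_cancel_right_pos by blast
  then show ?thesis by (simp add: y_def)
qed

lemma kappa_le_Rayleigh:
  fixes S :: "real^'n^'n"
  assumes "pos_def S" and "card J \<le> s"
    and "l1norm_on (- J) u \<le> c0 * l1norm_on J u"
  shows "kappa S s c0 * (norm u)\<^sup>2 \<le> u \<bullet> (S *v u)"
proof (cases "u = 0")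
  case False
  have "kappa S s c0 \<le> (u \<bullet> (S *v u)) / (norm u)\<^sup>2"
    unfolding kappa_def using assms False
    by (intro cInf_lower bdd_belowI[of _ 0])
      (auto intro!: divide_nonneg_nonneg pos_def_quadratic_form_nonneg)
  then show ?thesis using False by (simp add: field_simps)
qed simp

lemma pos_def_coercive:
  fixes S :: "real^'n^'n"
  assumes "pos_def S"
  obtains c where "c > 0" and "\<And>u. c * (norm u)\<^sup>2 \<le> u \<bullet> (S *v u)"
proof -
  have "continuous_on (sphere 0 1) (\<lambda>u::real^'n. u \<bullet> (S *v u))"
    by (intro continuous_intros linear_continuous_on bounded_linear.linear
        matrix_vector_mul_bounded_linear)
  moreover have "sphere (0::real^'n) 1 \<noteq> {}"
    using norm_axis_1[of undefined] by (metis empty_iff mem_sphere_0)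
  ultimately obtain x where x: "x \<in> sphere 0 1"
    and x_min: "\<forall>v\<in>sphere 0 1. x \<bullet> (S *v x) \<le> v \<bullet> (S *v v)"
    using continuous_attains_inf[OF compact_sphere] by blast
  have "x \<bullet> (S *v x) * (norm u)\<^sup>2 \<le> u \<bullet> (S *v u)" for u
  proof (cases "u = 0")
    case False
    then have "u /\<^sub>R norm u \<in> sphere 0 1" by simp
    with x_min have "x \<bullet> (S *v x) \<le> (u /\<^sub>R norm u) \<bullet> (S *v (u /\<^sub>R norm u))" by blast
    also have "\<dots> = (u \<bullet> (S *v u)) / (norm u)\<^sup>2"
      by (simp only: quadratic_form_scaleR) (simp add: field_simps)
    finally show ?thesis using False by (simp add: field_simps)
  qed simp
  moreover have "x \<bullet> (S *v x) > 0"
    using assms x by (simp add: pos_def_def) (metis norm_zero zero_neq_one mem_sphere_0)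
  ultimately show ?thesis using that by blast
qed

lemma kappa_pos:
  fixes S :: "real^'n^'n"
  assumes "pos_def S" and "s \<ge> 1" and "c0 \<ge> 0"
  shows "kappa S s c0 > 0"
proof -
  obtain c where "c > 0" and c: "\<And>u. c * (norm u)\<^sup>2 \<le> u \<bullet> (S *v u)"
    using pos_def_coercive[OF assms(1)] by blast
  let ?e = "axis undefined (1::real) :: real^'n"
  have "l1norm_on (- {undefined}) ?e = 0"
    by (simp add: l1norm_on_def axis_def)
  then have "(?e \<bullet> (S *v ?e)) / (norm ?e)\<^sup>2 \<in> {(u \<bullet> (S *v u)) / (norm u)\<^sup>2 | J u.
      card (J :: 'n set) \<le> s \<and> u \<noteq> 0 \<and> l1norm_on (- J) u \<le> c0 * l1norm_on J u}"
    using assms by (auto simp: l1norm_on_def intro!: exI[of _ "{undefined}"] exI[of _ ?e])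
  then have "c \<le> kappa S s c0"
    unfolding kappa_def using c by (intro cInf_greatest) (auto simp: field_simps)
  with \<open>c > 0\<close> show ?thesis by simp
qed

lemma l1norm_split: "l1norm x = l1norm_on J x + l1norm_on (- J) x"
  unfolding l1norm_def l1norm_on_def using sum.Int_Diff[of UNIV _ J]
  by (simp add: Compl_eq_Diff_UNIV)

lemma l1norm_on_nonneg: "0 \<le> l1norm_on J x"
  by (simp add: l1norm_on_def sum_nonneg)

lemma l1norm_on_eq_0: "(\<And>i. i \<in> J \<Longrightarrow> x $ i = 0) \<Longrightarrow> l1norm_on J x = 0"
  by (simp add: l1norm_on_def)

lemma sum_square_le_norm: "(\<Sum>i\<in>J. (x $ i)\<^sup>2) \<le> (norm x)\<^sup>2"
proof -
  have "(\<Sum>i\<in>J. (x $ i)\<^sup>2) \<le> (\<Sum>i\<in>UNIV. (x $ i)\<^sup>2)" by (intro sum_mono2) auto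
  also have "\<dots> = (norm x)\<^sup>2"
    unfolding power2_norm_eq_inner inner_vec_def by (simp add: power2_eq_square)
  finally show ?thesis .
qed

lemma l1norm_on_square_le:
  fixes x :: "real^'n"
  shows "(l1norm_on J x)\<^sup>2 \<le> real (card J) * (norm x)\<^sup>2"
proof -
  have "(l1norm_on J x)\<^sup>2 \<le> (\<Sum>i\<in>J. \<bar>x $ i\<bar>\<^sup>2) * real (card J)"
    unfolding l1norm_on_def by (rule sum_squared_le_sum_of_squares)
  also have "\<dots> \<le> (norm x)\<^sup>2 * real (card J)"
    using sum_square_le_norm[of x J] by (intro mult_right_mono) auto
  finally show ?thesis by (simp add: mult.commute)
qed

lemma l1norm_shrink_coordinate:
  assumes "0 < t" "t \<le> \<bar>x $ i\<bar>"
  shows "l1norm (x - (t * sgn (x $ i)) *\<^sub>R axis i 1) = l1norm x - t"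
proof -
  have "\<bar>x $ i - t * sgn (x $ i)\<bar> = \<bar>x $ i\<bar> - t"
    using assms by (cases "x $ i > 0") (auto simp: sgn_if)
  moreover have "(\<Sum>j\<in>UNIV - {i}. \<bar>(x - (t * sgn (x $ i)) *\<^sub>R axis i 1) $ j\<bar>)
      = (\<Sum>j\<in>UNIV - {i}. \<bar>x $ j\<bar>)"
    by (rule sum.cong) (auto simp: axis_def)
  ultimately show ?thesis
    unfolding l1norm_def by (simp add: sum.remove[of UNIV i] axis_def)
qed

lemma lasso_obj_add:
  assumes "transpose S = S"
  shows "lasso_obj S \<theta>0 \<xi> (\<theta> + w) = lasso_obj S \<theta>0 \<xi> \<theta> + w \<bullet> (S *v (\<theta> - \<theta>0))
           + w \<bullet> (S *v w) / 2 + \<xi> * (l1norm (\<theta> + w) - l1norm \<theta>)"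
proof -
  have "\<theta> + w - \<theta>0 = (\<theta> - \<theta>0) + w" by simp
  then have "(\<theta> + w - \<theta>0) \<bullet> (S *v (\<theta> + w - \<theta>0))
      = (\<theta> - \<theta>0) \<bullet> (S *v (\<theta> - \<theta>0)) + 2 * (w \<bullet> (S *v (\<theta> - \<theta>0))) + w \<bullet> (S *v w)"
    by (simp only: quadratic_form_add[OF assms])
  then show ?thesis unfolding lasso_obj_def right_diff_distrib by simp
qed

lemma lasso_minimizer_active_coordinate:
  fixes S :: "real^'n^'n"
  assumes "pos_def S"
    and min: "\<forall>\<theta>. lasso_obj S \<theta>0 \<xi> \<theta> \<ge> lasso_obj S \<theta>0 \<xi> \<theta>hat"
    and "\<theta>hat $ i \<noteq> 0"
  shows "\<xi> \<le> \<bar>(S *v (\<theta>hat - \<theta>0)) $ i\<bar>"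
proof (rule ccontr)
  define r where "r = (S *v (\<theta>hat - \<theta>0)) $ i"
  define d where "d = axis i 1 \<bullet> (S *v axis i (1::real))"
  define sn where "sn = sgn (\<theta>hat $ i)"
  assume "\<not> \<xi> \<le> \<bar>(S *v (\<theta>hat - \<theta>0)) $ i\<bar>"
  then have gap: "0 < \<xi> - \<bar>r\<bar>" by (simp add: r_def)
  have d_nonneg: "0 \<le> d" unfolding d_def by (rule pos_def_quadratic_form_nonneg[OF assms(1)])
  define t where "t = min \<bar>\<theta>hat $ i\<bar> ((\<xi> - \<bar>r\<bar>) / (d + 1))"
  have t_pos: "0 < t" using assms(3) gap d_nonneg by (simp add: t_def)
  have t_le: "t \<le> \<bar>\<theta>hat $ i\<bar>" by (simp add: t_def)
  have "t * d \<le> (\<xi> - \<bar>r\<bar>) / (d + 1) * d"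
    using d_nonneg by (intro mult_right_mono) (auto simp: t_def)
  also have "\<dots> < \<xi> - \<bar>r\<bar>" using gap d_nonneg by (simp add: field_simps)
  finally have small: "t * d / 2 < \<xi> - \<bar>r\<bar>" using gap by simp
  define w where "w = (- (t * sn)) *\<^sub>R axis i (1::real)"
  have "\<theta>hat + w = \<theta>hat - (t * sgn (\<theta>hat $ i)) *\<^sub>R axis i 1" by (simp add: w_def sn_def)
  then have l1: "l1norm (\<theta>hat + w) - l1norm \<theta>hat = - t"
    using l1norm_shrink_coordinate[OF t_pos t_le] by simp
  have quad: "w \<bullet> (S *v w) = t * t * d"
    using assms(3) unfolding w_def d_def quadratic_form_scaleR by (simp add: sn_def sgn_if power2_eq_square)
  have lin: "w \<bullet> (S *v (\<theta>hat - \<theta>0)) \<le> t * \<bar>r\<bar>"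
  proof -
    have "w \<bullet> (S *v (\<theta>hat - \<theta>0)) = - (t * (sn * r))" by (simp add: w_def inner_axis' r_def)
    also have "\<dots> = t * (- (sn * r))" by simp
    also have "\<dots> \<le> t * \<bar>r\<bar>"
      using t_pos by (intro mult_left_mono) (auto simp: sn_def sgn_if)
    finally show ?thesis .
  qed
  have "0 \<le> w \<bullet> (S *v (\<theta>hat - \<theta>0)) + w \<bullet> (S *v w) / 2 - \<xi> * t"
    using min[rule_format, of "\<theta>hat + w"] l1
    unfolding lasso_obj_add[OF pos_def_symmetric[OF assms(1)]] by simp
  with lin quad have "t * \<xi> \<le> t * (\<bar>r\<bar> + t * d / 2)" by (simp add: algebra_simps)
  with t_pos small show False by (simp add: mult_le_cancel_left_pos)
qed

lemma lasso_basic_inequality: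
  assumes min: "\<forall>\<theta>. lasso_obj S \<theta>0 \<xi> \<theta> \<ge> lasso_obj S \<theta>0 \<xi> \<theta>hat"
    and "\<xi> \<ge> 0" and supp: "\<And>i. i \<notin> J \<Longrightarrow> \<theta>0 $ i = 0"
  shows "(\<theta>hat - \<theta>0) \<bullet> (S *v (\<theta>hat - \<theta>0)) / 2 + \<xi> * l1norm_on (- J) (\<theta>hat - \<theta>0)
           \<le> \<xi> * l1norm_on J (\<theta>hat - \<theta>0)"
proof -
  define D where "D = \<theta>hat - \<theta>0"
  have "D \<bullet> (S *v D) / 2 + \<xi> * l1norm \<theta>hat \<le> \<xi> * l1norm \<theta>0"
    using min[rule_format, of \<theta>0] by (simp add: lasso_obj_def D_def)
  moreover have "l1norm \<theta>0 = l1norm_on J \<theta>0"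
    using l1norm_split[of \<theta>0 J] l1norm_on_eq_0[of "- J" \<theta>0] supp by simp
  moreover have "l1norm \<theta>hat = l1norm_on J \<theta>hat + l1norm_on (- J) D"
  proof -
    have "l1norm_on (- J) \<theta>hat = l1norm_on (- J) D"
      unfolding l1norm_on_def D_def using supp by (intro sum.cong) auto
    then show ?thesis using l1norm_split[of \<theta>hat J] by simp
  qed
  moreover have "\<xi> * (l1norm_on J \<theta>0 - l1norm_on J \<theta>hat) \<le> \<xi> * l1norm_on J D"
    unfolding l1norm_on_def sum_subtractf[symmetric] D_def
    using \<open>\<xi> \<ge> 0\<close> by (intro mult_left_mono sum_mono) auto
  ultimately show ?thesis unfolding D_def[symmetric] by (simp add: algebra_simps)
qed

lemma lasso_prediction_error_le:
  fixes S :: "real^'n^'n"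
  assumes "pos_def S" and "\<xi> > 0"
    and min: "\<forall>\<theta>. lasso_obj S \<theta>0 \<xi> \<theta> \<ge> lasso_obj S \<theta>0 \<xi> \<theta>hat"
  shows "(\<theta>hat - \<theta>0) \<bullet> (S *v (\<theta>hat - \<theta>0))
           \<le> 4 * \<xi>\<^sup>2 * l0norm \<theta>0 / kappa S (l0norm \<theta>0) 1"
proof -
  define D q S0 where "D = \<theta>hat - \<theta>0" and "q = D \<bullet> (S *v D)" and "S0 = {i. \<theta>0 $ i \<noteq> 0}"
  have s0: "l0norm \<theta>0 = card S0" by (simp add: l0norm_def S0_def)
  have q_nonneg: "0 \<le> q" unfolding q_def by (rule pos_def_quadratic_form_nonneg[OF assms(1)])
  have basic: "q / 2 + \<xi> * l1norm_on (- S0) D \<le> \<xi> * l1norm_on S0 D"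
    unfolding q_def D_def
    using lasso_basic_inequality[OF min less_imp_le[OF \<open>\<xi> > 0\<close>], where J = S0]
    by (simp add: S0_def)
  then have "\<xi> * l1norm_on (- S0) D \<le> \<xi> * l1norm_on S0 D" using q_nonneg by linarith
  then have cone: "l1norm_on (- S0) D \<le> 1 * l1norm_on S0 D" using \<open>\<xi> > 0\<close> by simp
  have "0 \<le> \<xi> * l1norm_on (- S0) D" using \<open>\<xi> > 0\<close> by (simp add: l1norm_on_nonneg)
  then have "q \<le> 2 * (\<xi> * l1norm_on S0 D)" using basic by linarith
  then have "q\<^sup>2 \<le> (2 * (\<xi> * l1norm_on S0 D))\<^sup>2" using q_nonneg by (rule power_mono)
  also have "\<dots> = 4 * \<xi>\<^sup>2 * (l1norm_on S0 D)\<^sup>2" by (simp add: power_mult_distrib)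
  also have "\<dots> \<le> 4 * \<xi>\<^sup>2 * (card S0 * (norm D)\<^sup>2)"
    by (intro mult_left_mono l1norm_on_square_le) simp
  finally have q_sq: "q\<^sup>2 \<le> 4 * \<xi>\<^sup>2 * card S0 * (norm D)\<^sup>2" by (simp add: mult.assoc)
  show ?thesis
  proof (cases "card S0 = 0")
    case True
    then show ?thesis using q_sq by (simp add: s0 q_def D_def)
  next
    case False
    define k where "k = kappa S (card S0) 1"
    have "1 \<le> card S0" using False by linarith
    then have k_pos: "k > 0" unfolding k_def by (rule kappa_pos[OF assms(1)]) simp
    have "k * (norm D)\<^sup>2 \<le> q"
      unfolding k_def q_def using kappa_le_Rayleigh[OF assms(1) _ cone] by simp
    then have "4 * \<xi>\<^sup>2 * card S0 * (norm D)\<^sup>2 \<le> 4 * \<xi>\<^sup>2 * card S0 * (q / k)"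
      using k_pos by (intro mult_left_mono) (simp_all add: field_simps)
    with q_sq have "q * q \<le> (4 * \<xi>\<^sup>2 * card S0 / k) * q" by (simp add: power2_eq_square)
    then have "q \<le> 4 * \<xi>\<^sup>2 * card S0 / k"
      using q_nonneg k_pos
      by (cases "q = 0") (simp, metis less_eq_real_def mult_le_cancel_right_pos)
    then show ?thesis by (simp add: s0 k_def q_def D_def)
  qed
qed

lemma lasso_support_le_prediction_error:
  fixes S :: "real^'n^'n"
  assumes "pos_def S" and "\<xi> > 0"
    and min: "\<forall>\<theta>. lasso_obj S \<theta>0 \<xi> \<theta> \<ge> lasso_obj S \<theta>0 \<xi> \<theta>hat"
  shows "real (l0norm \<theta>hat) * \<xi>\<^sup>2 \<le> spec_norm S * ((\<theta>hat - \<theta>0) \<bullet> (S *v (\<theta>hat - \<theta>0)))"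
proof -
  define r where "r = S *v (\<theta>hat - \<theta>0)"
  have "real (l0norm \<theta>hat) * \<xi>\<^sup>2 = (\<Sum>i\<in>{i. \<theta>hat $ i \<noteq> 0}. \<xi>\<^sup>2)"
    by (simp add: l0norm_def)
  also have "\<dots> \<le> (\<Sum>i\<in>{i. \<theta>hat $ i \<noteq> 0}. (r $ i)\<^sup>2)"
  proof (rule sum_mono)
    fix i assume "i \<in> {i. \<theta>hat $ i \<noteq> 0}"
    then have "\<xi> \<le> \<bar>r $ i\<bar>"
      using lasso_minimizer_active_coordinate[OF assms(1) min] by (simp add: r_def)
    then show "\<xi>\<^sup>2 \<le> (r $ i)\<^sup>2"
      using power_mono[of \<xi> "\<bar>r $ i\<bar>" 2] \<open>\<xi> > 0\<close> by simp
  qed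
  also have "\<dots> \<le> (norm r)\<^sup>2" by (rule sum_square_le_norm)
  also have "\<dots> \<le> spec_norm S * ((\<theta>hat - \<theta>0) \<bullet> (S *v (\<theta>hat - \<theta>0)))"
    unfolding r_def by (rule norm_matrix_vector_le_spec_norm[OF \<open>pos_def S\<close>])
  finally show ?thesis .
qed

theorem lemma3p1:
  fixes \<Sigma> :: "real ^ 'n ^ 'n" and \<theta>0 \<theta>hat :: "real ^ 'n" and \<xi> :: real
  assumes "pos_def \<Sigma>"
    and "\<xi> > 0"
    and "\<forall>\<theta>. lasso_obj \<Sigma> \<theta>0 \<xi> \<theta> \<ge> lasso_obj \<Sigma> \<theta>0 \<xi> \<theta>hat"
    and "\<forall>\<theta>'. (\<forall>\<theta>. lasso_obj \<Sigma> \<theta>0 \<xi> \<theta> \<ge> lasso_obj \<Sigma> \<theta>0 \<xi> \<theta>') \<longrightarrow> \<theta>' = \<theta>hat"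
  shows "real (l0norm \<theta>hat)
           \<le> (1 + 4 * spec_norm \<Sigma> / kappa \<Sigma> (l0norm \<theta>0) 1) * real (l0norm \<theta>0)"
proof -
  define k s0 where "k = kappa \<Sigma> (l0norm \<theta>0) 1" and "s0 = real (l0norm \<theta>0)"
  have "real (l0norm \<theta>hat) * \<xi>\<^sup>2 \<le> spec_norm \<Sigma> * (4 * \<xi>\<^sup>2 * s0 / k)"
    using lasso_support_le_prediction_error[OF assms(1-3)]
      mult_left_mono[OF lasso_prediction_error_le[OF assms(1-3)] spec_norm_nonneg[of \<Sigma>]]
    unfolding k_def s0_def by linarith
  also have "\<dots> = (4 * spec_norm \<Sigma> * s0 / k) * \<xi>\<^sup>2" by simp
  finally have "real (l0norm \<theta>hat) \<le> 4 * spec_norm \<Sigma> * s0 / k"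
    using \<open>\<xi> > 0\<close> by (metis mult_le_cancel_right_pos zero_less_power)
  also have "\<dots> \<le> (1 + 4 * spec_norm \<Sigma> / k) * s0"
    by (simp add: s0_def algebra_simps)
  finally show ?thesis by (simp add: k_def s0_def)
qed

end
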